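(* Let $n$ be even and consider the problem BPAOAZ (defined in the context). The expected running time of $\text{EMPMO}_{\text{payoff}}$ applied to BPAOAZ is bounded by $O(n\log n)$.
   Context: BPAOAZ: for $\mathbf{x}=(x_1,\dots,x_n)\in\{0,1\}^n$ with $n$ even, party 1 has objectives $f_{11}(\mathbf{x})=\sum_{i=n/2+1}^{n}x_i$ and $f_{12}(\mathbf{x})=\sum_{i=1}^{n/2}x_i+\sum_{i=n/2+1}^{n}(1-x_i)$; party 2 has objectives $f_{21}(\mathbf{x})=\sum_{i=1}^{n/2}(1-x_i)+\sum_{i=n/2+1}^{n}x_i$ and $f_{22}(\mathbf{x})=\sum_{i=1}^{n/2}x_i$; all objectives are maximized. The common Pareto set (solutions Pareto optimal for both parties) is $\{1^n\}$. One-bit mutation flips one uniformly random bit. Multi-party payoff: for party $m\in\{1,2\}$ and solutions $\mathbf{x},\mathbf{x}'$, $\pi_m(\mathbf{x},\mathbf{x}')=1$ if $f_{mk}(\mathbf{x}')\ge f_{mk}(\mathbf{x})$ for all $k\in\{1,2\}$; $\pi_m(\mathbf{x},\mathbf{x}')=-1$ if (not the previous case and) $f_{mk}(\mathbf{x}')\le f_{mk}(\mathbf{x})$ for all $k$; and $0$ otherwise. The multi-party payoff is $\pi_{\mathbf{x},\mathbf{x}'}=\pi_1(\mathbf{x},\mathbf{x}')+\pi_2(\mathbf{x},\mathbf{x}')$. $\text{EMPMO}_{\text{payoff}}$: choose $\mathbf{x}$ uniformly from $\{0,1\}^n$, $P=\{\mathbf{x}\}$. Each iteration: pick $\mathbf{x}\in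 P$ uniformly at random, apply one-bit mutation to get $\mathbf{x}'$, and if $\pi_{\mathbf{x},\mathbf{x}'}>0$ set $P\leftarrow(P\setminus\{\mathbf{x}\})\cup\{\mathbf{x}'\}$. The running time is the number of fitness evaluations (mutations) until the common Pareto-optimal solution is included in the population for the first time. *)

theory Defs
  imports "HOL-Probability.Probability"
begin

text \<open>Solutions of length n are bool lists; index i (0-based) = bit x_{i+1}.
  First half: indices 0..<n div 2; second half: n div 2..<n.\<close>

definition cnt :: "nat set \<Rightarrow> (nat \<Rightarrow> bool) \<Rightarrow> nat" where
  "cnt I P = (\<Sum>i\<in>I. if P i then 1 else 0)"

text \<open>BPAOAZ objectives: bpaoaz n m k x = f_{mk}(x), all maximised.\<close>
definition bpaoaz :: "nat \<Rightarrow> nat \<Rightarrow> nat \<Rightarrow> bool list \<Rightarrow> nat" where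
  "bpaoaz n m k x =
    (if m = 1 \<and> k = 1 then cnt {n div 2..<n} (\<lambda>i. x ! i)
     else if m = 1 \<and> k = 2 then cnt {..<n div 2} (\<lambda>i. x ! i) + cnt {n div 2..<n} (\<lambda>i. \<not> x ! i)
     else if m = 2 \<and> k = 1 then cnt {..<n div 2} (\<lambda>i. \<not> x ! i) + cnt {n div 2..<n} (\<lambda>i. x ! i)
     else cnt {..<n div 2} (\<lambda>i. x ! i))"

definition party_payoff :: "nat \<Rightarrow> nat \<Rightarrow> bool list \<Rightarrow> bool list \<Rightarrow> int" where
  "party_payoff n m x x' =
    (if \<forall>k\<in>{1,2}. bpaoaz n m k x' \<ge> bpaoaz n m k x then 1
     else if \<forall>k\<in>{1,2}. bpaoaz n m k x' \<le> bpaoaz n m k x then -1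
     else 0)"

definition payoff :: "nat \<Rightarrow> bool list \<Rightarrow> bool list \<Rightarrow> int" where
  "payoff n x x' = party_payoff n 1 x x' + party_payoff n 2 x x'"

definition one_bit_mutation :: "nat \<Rightarrow> bool list \<Rightarrow> bool list pmf" where
  "one_bit_mutation n x = map_pmf (\<lambda>i. x[i := \<not> x ! i]) (pmf_of_set {..<n})"

text \<open>One iteration of EMPMO_payoff (one fitness evaluation).\<close>
definition empmo_step :: "nat \<Rightarrow> bool list set \<Rightarrow> bool list set pmf" where
  "empmo_step n P =
    do { x \<leftarrow> pmf_of_set P;
         x' \<leftarrow> one_bit_mutation n x;
         return_pmf (if payoff n x x' > 0 then insert x' (P - {x}) else P) }"

definition target :: "nat \<Rightarrow> bool list" where
  "target n = replicate n True"

definition stopped_step :: "nat \<Rightarrow> bool list set \<Rightarrow> bool list set pmf" where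
  "stopped_step n P = (if target n \<in> P then return_pmf P else empmo_step n P)"

fun pop_dist :: "nat \<Rightarrow> nat \<Rightarrow> bool list set pmf" where
  "pop_dist n 0 = map_pmf (\<lambda>x. {x}) (pmf_of_set {x. length x = n})"
| "pop_dist n (Suc t) = pop_dist n t \<bind> stopped_step n"

text \<open>Expected running time E[T] = sum over t of Pr[T > t], where T > t iff
  1^n is not in the population after t iterations.\<close>
definition expected_runtime :: "nat \<Rightarrow> ennreal" where
  "expected_runtime n = (\<Sum>t. ennreal (measure_pmf.prob (pop_dist n t) {P. target n \<notin> P}))"

end

theory Submission
  imports Defs "HOL-Analysis.Harmonic_Numbers"
begin

(* Flipping a 0-bit of x to 1 gives payoff 1 (one party gains in one objective and keeps the
   other, the other party gains in one and loses in the other), while flipping a 1-bit gives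
   payoff -1. Hence the population stays a single solution and one iteration just sets a
   uniformly random bit to 1: a coupon collector. If x has k zeros, the potential n H_k
   decreases by exactly 1 in expectation (a zero is hit with probability k/n, and
   H_k - H_(k-1) = 1/k). Summing Pr[T > t] over t therefore telescopes to at most the initial
   potential n H_n <= n (ln n + 1) <= 2 n ln n for n >= 3. *)

lemma suminf_prob_le_nn_integral_potential:
  fixes X :: "nat \<Rightarrow> 'a pmf" and K :: "'a \<Rightarrow> 'a pmf" and \<phi> :: "'a \<Rightarrow> ennreal"
  assumes X_Suc: "\<And>t. X (Suc t) = X t \<bind> K"
    and init: "set_pmf (X 0) \<subseteq> S"
    and closed: "\<And>s. s \<in> S \<Longrightarrow> set_pmf (K s) \<subseteq> S"
    and drift: "\<And>s. s \<in> S \<Longrightarrow> indicator A s + (\<integral>\<^sup>+s'. \<phi> s' \<partial>K s) \<le> \<phi> s"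
  shows "(\<Sum>t. ennreal (measure_pmf.prob (X t) A)) \<le> (\<integral>\<^sup>+s. \<phi> s \<partial>X 0)"
proof -
  have support: "set_pmf (X t) \<subseteq> S" for t
    by (induction t) (use init closed in \<open>auto simp: X_Suc\<close>)
  have one_step: "ennreal (measure_pmf.prob (X t) A) + (\<integral>\<^sup>+s. \<phi> s \<partial>X (Suc t))
      \<le> (\<integral>\<^sup>+s. \<phi> s \<partial>X t)" for t
  proof -
    have "ennreal (measure_pmf.prob (X t) A) + (\<integral>\<^sup>+s. \<phi> s \<partial>X (Suc t))
        = (\<integral>\<^sup>+s. indicator A s + (\<integral>\<^sup>+s'. \<phi> s' \<partial>K s) \<partial>X t)"
      by (simp add: X_Suc nn_integral_add measure_pmf.emeasure_eq_measure[symmetric])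
    also have "\<dots> \<le> (\<integral>\<^sup>+s. \<phi> s \<partial>X t)"
      using support drift by (intro nn_integral_mono_AE) (auto simp: AE_measure_pmf_iff)
    finally show ?thesis .
  qed
  have partial: "(\<Sum>t<T. ennreal (measure_pmf.prob (X t) A)) + (\<integral>\<^sup>+s. \<phi> s \<partial>X T)
      \<le> (\<integral>\<^sup>+s. \<phi> s \<partial>X 0)" for T
  proof (induction T)
    case (Suc T)
    have "(\<Sum>t<Suc T. ennreal (measure_pmf.prob (X t) A)) + (\<integral>\<^sup>+s. \<phi> s \<partial>X (Suc T))
        \<le> (\<Sum>t<T. ennreal (measure_pmf.prob (X t) A)) + (\<integral>\<^sup>+s. \<phi> s \<partial>X T)"
      using add_left_mono[OF one_step[of T], of "\<Sum>t<T. ennreal (measure_pmf.prob (X t) A)"]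
      by (simp add: add.assoc)
    also have "\<dots> \<le> (\<integral>\<^sup>+s. \<phi> s \<partial>X 0)"
      by (rule Suc.IH)
    finally show ?case .
  qed simp
  show ?thesis
    unfolding suminf_eq_SUP
  proof (rule SUP_least)
    show "(\<Sum>t<T. ennreal (measure_pmf.prob (X t) A)) \<le> (\<integral>\<^sup>+s. \<phi> s \<partial>X 0)" for T
      using partial[of T] by (rule order_trans[rotated]) simp
  qed
qed

lemma cnt_list_update_mem:
  assumes "finite I" "i \<in> I" "i < length x"
  shows "cnt I (\<lambda>j. P (x[i := v] ! j)) + (if P (x ! i) then 1 else 0)
       = cnt I (\<lambda>j. P (x ! j)) + (if P v then 1 else 0)"
proof -
  have "(\<Sum>j\<in>I - {i}. if P (x[i := v] ! j) then 1 else 0)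
      = (\<Sum>j\<in>I - {i}. if P (x ! j) then 1 else (0::nat))"
    by (rule sum.cong) auto
  then show ?thesis
    using assms by (simp add: cnt_def sum.remove[OF assms(1,2)])
qed

lemma cnt_list_update_not_mem:
  "i \<notin> I \<Longrightarrow> cnt I (\<lambda>j. P (x[i := v] ! j)) = cnt I (\<lambda>j. P (x ! j))"
  unfolding cnt_def by (intro sum.cong refl) (metis nth_list_update_neq)

lemma payoff_flip_pos_iff:
  assumes "length x = n" "i < n"
  shows "payoff n x (x[i := \<not> x ! i]) > 0 \<longleftrightarrow> \<not> x ! i"
proof (cases "i < n div 2")
  case True
  then show ?thesis
    using assms cnt_list_update_mem[of "{..<n div 2}" i x "\<lambda>b. b" "\<not> x ! i"]
      cnt_list_update_mem[of "{..<n div 2}" i x Not "\<not> x ! i"]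
      cnt_list_update_not_mem[of i "{n div 2..<n}" "\<lambda>b. b" x "\<not> x ! i"]
      cnt_list_update_not_mem[of i "{n div 2..<n}" Not x "\<not> x ! i"]
    by (cases "x ! i") (simp_all add: payoff_def party_payoff_def bpaoaz_def)
next
  case False
  then show ?thesis
    using assms cnt_list_update_mem[of "{n div 2..<n}" i x "\<lambda>b. b" "\<not> x ! i"]
      cnt_list_update_mem[of "{n div 2..<n}" i x Not "\<not> x ! i"]
      cnt_list_update_not_mem[of i "{..<n div 2}" "\<lambda>b. b" x "\<not> x ! i"]
      cnt_list_update_not_mem[of i "{..<n div 2}" Not x "\<not> x ! i"]
    by (cases "x ! i") (simp_all add: payoff_def party_payoff_def bpaoaz_def)
qed

definition zeros :: "bool list \<Rightarrow> nat" where
  "zeros x = cnt {..<length x} (\<lambda>j. \<not> x ! j)"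

lemma zeros_le_length: "zeros x \<le> length x"
proof -
  have "zeros x \<le> (\<Sum>j<length x. 1)"
    unfolding zeros_def cnt_def by (rule sum_mono) auto
  then show ?thesis by simp
qed

lemma zeros_eq_0_iff: "zeros x = 0 \<longleftrightarrow> x = replicate (length x) True"
  by (auto simp: zeros_def cnt_def list_eq_iff_nth_eq)

lemma zeros_set_bit:
  assumes "i < length x"
  shows "zeros (x[i := True]) = (if x ! i then zeros x else zeros x - 1)"
  using cnt_list_update_mem[of "{..<length x}" i x Not True] assms
  by (auto simp: zeros_def)

lemma stopped_step_singleton:
  assumes "length x = n" "n > 0" "x \<noteq> target n"
  shows "stopped_step n {x} = map_pmf (\<lambda>i. {x[i := True]}) (pmf_of_set {..<n})"
proof -
  let ?flip = "\<lambda>i. x[i := \<not> x ! i]"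
  have "stopped_step n {x}
      = map_pmf (\<lambda>i. if payoff n x (?flip i) > 0 then insert (?flip i) ({x} - {x}) else {x})
          (pmf_of_set {..<n})"
    using assms(3) by (simp add: stopped_step_def empmo_step_def one_bit_mutation_def
        pmf_of_set_singleton map_pmf_def bind_assoc_pmf bind_return_pmf)
  also have "\<dots> = map_pmf (\<lambda>i. {x[i := True]}) (pmf_of_set {..<n})"
  proof (rule map_pmf_cong)
    fix i assume "i \<in> set_pmf (pmf_of_set {..<n})"
    then have "i < n" using assms(2) by (subst (asm) set_pmf_of_set) auto
    then have "payoff n x (?flip i) > 0 \<longleftrightarrow> \<not> x ! i"
      by (rule payoff_flip_pos_iff[OF assms(1)])
    moreover have "x ! i \<Longrightarrow> x[i := True] = x"
      by (metis list_update_id)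
    ultimately show "(if payoff n x (?flip i) > 0 then insert (?flip i) ({x} - {x}) else {x})
        = {x[i := True]}"
      by auto
  qed simp
  finally show ?thesis .
qed

lemma sum_harm_zeros_set_bit:
  assumes "zeros x > 0"
  shows "(\<Sum>i<length x. harm (zeros (x[i := True]))) + 1 = real (length x) * harm (zeros x)"
proof -
  let ?k = "zeros x"
  have "harm ?k = harm (?k - 1) + (1 / real ?k :: real)"
    using harm_Suc[of "?k - 1"] assms by (simp add: inverse_eq_divide)
  then have harm_set_bit: "harm (zeros (x[i := True])) = harm ?k - (if x ! i then 0 else 1 / real ?k)"
    if "i < length x" for i
    using zeros_set_bit[OF that] by simp
  have "(\<Sum>i<length x. if x ! i then 0 else 1 / real ?k) = real ?k / real ?k"
    unfolding zeros_def cnt_def of_nat_sum sum_divide_distrib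
    by (intro sum.cong) auto
  also have "\<dots> = 1"
    using assms by simp
  finally show ?thesis
    by (simp add: harm_set_bit sum_subtractf)
qed

definition potential :: "nat \<Rightarrow> bool list set \<Rightarrow> real" where
  "potential n P = (\<Sum>x\<in>P. real n * harm (zeros x))"

lemma stopped_step_potential_drift:
  assumes "length x = n" "n > 0"
  shows "indicator {P. target n \<notin> P} {x} + (\<integral>\<^sup>+P. ennreal (potential n P) \<partial>stopped_step n {x})
      \<le> ennreal (potential n {x})"
proof (cases "x = target n")
  case True
  then show ?thesis
    using zeros_eq_0_iff[of x] by (simp add: stopped_step_def potential_def target_def)
next
  case False
  let ?h = "\<lambda>i. harm (zeros (x[i := True])) :: real"
  have "zeros x > 0"
    using False zeros_eq_0_iff[of x] assms(1) by (auto simp: target_def)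
  then have sum_h: "(\<Sum>i<n. ?h i) + 1 = real n * harm (zeros x)"
    using sum_harm_zeros_set_bit assms(1) by blast
  have h_nonneg: "0 \<le> ?h i" for i
    by (rule harm_nonneg)
  have "(\<integral>\<^sup>+P. ennreal (potential n P) \<partial>stopped_step n {x})
      = (\<Sum>i<n. ennreal (real n * ?h i)) / of_nat n"
    using assms by (simp add: stopped_step_singleton[OF assms False] potential_def)
      (subst nn_integral_pmf_of_set; auto)
  also have "\<dots> = ennreal (\<Sum>i<n. ?h i)"
    using assms(2) h_nonneg
    by (simp add: sum_ennreal sum_nonneg divide_ennreal ennreal_of_nat_eq_real_of_nat
        flip: sum_distrib_left)
  finally have "indicator {P. target n \<notin> P} {x} + (\<integral>\<^sup>+P. ennreal (potential n P) \<partial>stopped_step n {x})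
      = ennreal (\<Sum>i<n. ?h i) + ennreal 1"
    using False by (simp add: add.commute)
  also have "\<dots> = ennreal ((\<Sum>i<n. ?h i) + 1)"
    by (rule ennreal_plus[symmetric]) (simp_all add: sum_nonneg h_nonneg)
  also have "\<dots> = ennreal (potential n {x})"
    by (simp add: sum_h potential_def)
  finally show ?thesis
    by simp
qed

lemma set_pmf_stopped_step_singleton:
  assumes "length x = n" "n > 0"
  shows "set_pmf (stopped_step n {x}) \<subseteq> {{y} | y. length y = n}"
proof (cases "x = target n")
  case True
  then show ?thesis using assms by (auto simp: stopped_step_def)
next
  case False
  then show ?thesis using assms by (auto simp: stopped_step_singleton)
qed

lemma set_pmf_pop_dist_0: "set_pmf (pop_dist n 0) = {{y} | y. length y = n}"
proof -
  have "{y :: bool list. length y = n} \<noteq> {}"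
    using length_replicate[of n True] by blast
  moreover have "finite {y :: bool list. length y = n}"
    using finite_lists_length_eq[of "UNIV :: bool set" n] by simp
  ultimately have "set_pmf (pmf_of_set {y :: bool list. length y = n}) = {y. length y = n}"
    by (rule set_pmf_of_set)
  then show ?thesis
    by auto
qed

lemma nn_integral_potential_pop_dist_0:
  "(\<integral>\<^sup>+P. ennreal (potential n P) \<partial>pop_dist n 0) \<le> ennreal (real n * harm n)"
proof -
  have "(\<integral>\<^sup>+P. ennreal (potential n P) \<partial>pop_dist n 0)
      \<le> (\<integral>\<^sup>+P. ennreal (real n * harm n) \<partial>pop_dist n 0)"
  proof (rule nn_integral_mono_AE, unfold AE_measure_pmf_iff, intro ballI)
    fix P assume "P \<in> set_pmf (pop_dist n 0)"
    then obtain y where "P = {y}" "length y = n"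
      unfolding set_pmf_pop_dist_0 by auto
    then show "ennreal (potential n P) \<le> ennreal (real n * harm n)"
      using zeros_le_length[of y]
      by (auto simp: potential_def intro!: ennreal_leI mult_left_mono harm_mono)
  qed
  then show ?thesis
    by (simp add: measure_pmf.emeasure_space_1)
qed

lemma expected_runtime_le_harm:
  assumes "n > 0"
  shows "expected_runtime n \<le> ennreal (real n * harm n)"
proof -
  let ?S = "{{y} | y. length y = n}"
  have "expected_runtime n \<le> (\<integral>\<^sup>+P. ennreal (potential n P) \<partial>pop_dist n 0)"
    unfolding expected_runtime_def
  proof (rule suminf_prob_le_nn_integral_potential)
    show "pop_dist n (Suc t) = pop_dist n t \<bind> stopped_step n" for t
      by simp
    show "set_pmf (pop_dist n 0) \<subseteq> ?S"
      unfolding set_pmf_pop_dist_0 ..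
    show "set_pmf (stopped_step n P) \<subseteq> ?S" if "P \<in> ?S" for P
      using that set_pmf_stopped_step_singleton[OF _ assms] by auto
    show "indicator {P. target n \<notin> P} P + (\<integral>\<^sup>+P'. ennreal (potential n P') \<partial>stopped_step n P)
        \<le> ennreal (potential n P)" if "P \<in> ?S" for P
      using that stopped_step_potential_drift[OF _ assms] by auto
  qed
  also have "\<dots> \<le> ennreal (real n * harm n)"
    by (rule nn_integral_potential_pop_dist_0)
  finally show ?thesis .
qed

lemma harm_le_ln_plus_one: "n > 0 \<Longrightarrow> harm n \<le> ln (real n) + 1"
  using euler_mascheroni_sequence_decreasing[of 1 n] by (simp add: harm_def)

theorem theorem3:
  shows "\<exists>c::real. \<exists>N::nat. \<forall>n\<ge>N. even n \<longrightarrow>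
           expected_runtime n \<le> ennreal (c * real n * ln (real n))"
proof (intro exI allI impI)
  fix n :: nat
  assume "3 \<le> n"
  then have "exp 1 \<le> real n"
    using exp_le by linarith
  then have "1 \<le> ln (real n)"
    using \<open>3 \<le> n\<close> by (subst ln_ge_iff) auto
  moreover have "harm n \<le> ln (real n) + 1"
    using \<open>3 \<le> n\<close> by (intro harm_le_ln_plus_one) simp
  ultimately have "real n * harm n \<le> 2 * real n * ln (real n)"
    using mult_left_mono[of "harm n" "2 * ln (real n)" "real n"] by simp
  then show "expected_runtime n \<le> ennreal (2 * real n * ln (real n))"
    using expected_runtime_le_harm[of n] \<open>3 \<le> n\<close> by (auto intro: order_trans ennreal_leI)
qed

end
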